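(* The set $\mathcal{K}(H)$ of compact operators is an $F_{\sigma\delta}$ subset of $\mathcal{B}(H)$ in the strong operator topology, i.e., a countable intersection of countable unions of strongly closed sets.
   Context: $H$ is a fixed infinite-dimensional separable complex Hilbert space, $\mathcal{B}(H)$ the bounded operators on $H$, with the strong operator topology (topology of pointwise norm convergence on $H$). $\mathcal{K}(H)$ is the set of compact operators. *)

theory Defs
  imports "HOL-Analysis.Analysis"
begin

text \<open>A complex Hilbert space is modelled as a real Hilbert space (real inner product,
complete) together with an orthogonal complex structure J (multiplication by i):
J is linear, J (J x) = -x, and J preserves the real inner product.
The complex scalar multiplication is (a + i b) x = a x + b J x.\<close>

definition complex_structure :: "('a::real_inner \<Rightarrow> 'a) \<Rightarrow> bool" where
  "complex_structure J \<longleftrightarrow> linear J \<and> (\<forall>x. J (J x) = - x) \<and> (\<forall>x y. inner (J x) (J y) = inner x y)"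

text \<open>Bounded complex-linear operators: bounded real-linear operators commuting with J.\<close>
definition bounded_ops :: "('a::real_normed_vector \<Rightarrow> 'a) \<Rightarrow> ('a \<Rightarrow>\<^sub>L 'a) set" where
  "bounded_ops J = {T. \<forall>x. blinfun_apply T (J x) = J (blinfun_apply T x)}"

definition compact_op :: "('a::real_normed_vector \<Rightarrow>\<^sub>L 'a) \<Rightarrow> bool" where
  "compact_op T \<longleftrightarrow> compact (closure (blinfun_apply T ` ball 0 1))"

definition SOT :: "('a::real_normed_vector \<Rightarrow>\<^sub>L 'a) topology" where
  "SOT = pullback_topology UNIV blinfun_apply (product_topology (\<lambda>_. euclidean) UNIV)"

definition separable_space :: "'a::metric_space itself \<Rightarrow> bool" where
  "separable_space _ \<longleftrightarrow> (\<exists>D::'a set. countable D \<and> closure D = UNIV)"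

definition infinite_dimensional :: "'a::real_vector itself \<Rightarrow> bool" where
  "infinite_dimensional _ \<longleftrightarrow> \<not> (\<exists>S::'a set. finite S \<and> span S = UNIV)"

end

theory Submission
  imports Defs
begin

(* Fix a countable dense set D in H.  A bounded operator T is compact iff
   the image of the open unit ball is totally bounded, and since D is dense this holds iff
   for every m there is a finite S \<subseteq> D such that every T x (with \<parallel>x\<parallel> < 1) lies within
   distance 1/(m+1) of some point of S.  For fixed S and radius r this condition defines a
   strongly closed set of operators, being an intersection over x of finite unions of the
   SOT-closed sets {T. dist (T x) y \<le> r}.  Since there are only countably many finite
   subsets of D, enumerating them gives closed sets F m n with
   K(H) = \<Inter>m. \<Union>n. F m n. *)

lemma compact_closure_iff_dense_nets:
  fixes A D :: "'a::{metric_space, complete_space} set"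
  assumes dense: "closure D = UNIV"
  shows "compact (closure A) \<longleftrightarrow>
         (\<forall>e>0. \<exists>S. finite S \<and> S \<subseteq> D \<and> A \<subseteq> (\<Union>y\<in>S. cball y e))"
proof
  assume cpt: "compact (closure A)"
  show "\<forall>e>0. \<exists>S. finite S \<and> S \<subseteq> D \<and> A \<subseteq> (\<Union>y\<in>S. cball y e)"
  proof (intro allI impI)
    fix e :: real assume "e > 0"
    then have half: "e / 2 > 0" by simp
    obtain k where k: "finite k" "closure A \<subseteq> (\<Union>c\<in>k. ball c (e / 2))"
      using cpt half unfolding compact_eq_totally_bounded by blast
    have "\<exists>d\<in>D. dist c d < e / 2" for c
    proof -
      have "c \<in> closure D" using dense by simp
      then obtain d where "d \<in> D" "dist d c < e / 2"
        using half unfolding closure_approachable by blast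
      then show ?thesis by (auto simp: dist_commute)
    qed
    then obtain f where f: "\<And>c. f c \<in> D" "\<And>c. dist c (f c) < e / 2" by metis
    have "A \<subseteq> (\<Union>y\<in>f ` k. cball y e)"
    proof
      fix a assume "a \<in> A"
      then have "a \<in> closure A" using closure_subset by blast
      then obtain c where c: "c \<in> k" "dist c a < e / 2"
        using k(2) by (auto simp: mem_ball)
      have "dist (f c) a \<le> dist (f c) c + dist c a" by (rule dist_triangle)
      also have "\<dots> < e" using c(2) f(2)[of c] by (simp add: dist_commute)
      finally show "a \<in> (\<Union>y\<in>f ` k. cball y e)" using c(1) by force
    qed
    then show "\<exists>S. finite S \<and> S \<subseteq> D \<and> A \<subseteq> (\<Union>y\<in>S. cball y e)"
      using k(1) f(1) by blast
  qed
next
  assume nets: "\<forall>e>0. \<exists>S. finite S \<and> S \<subseteq> D \<and> A \<subseteq> (\<Union>y\<in>S. cball y e)"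
  have "\<exists>k. finite k \<and> closure A \<subseteq> (\<Union>y\<in>k. ball y e)" if "e > 0" for e :: real
  proof -
    obtain S where S: "finite S" "A \<subseteq> (\<Union>y\<in>S. cball y (e / 2))"
      using nets \<open>e > 0\<close> by (meson half_gt_zero)
    have "closed (\<Union>y\<in>S. cball y (e / 2))"
      using S(1) by (intro closed_UN) auto
    then have "closure A \<subseteq> (\<Union>y\<in>S. cball y (e / 2))"
      using S(2) by (rule closure_minimal[rotated])
    also have "\<dots> \<subseteq> (\<Union>y\<in>S. ball y e)"
      using \<open>e > 0\<close> by auto
    finally show ?thesis using S(1) by blast
  qed
  then show "compact (closure A)"
    unfolding compact_eq_totally_bounded by (simp add: complete_eq_closed)
qed

definition ball_image_near :: "real \<Rightarrow> 'a::real_normed_vector set \<Rightarrow> ('a \<Rightarrow>\<^sub>L 'a) set" where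
  "ball_image_near r S = {T. \<forall>x\<in>ball 0 1. \<exists>y\<in>S. dist (blinfun_apply T x) y \<le> r}"

lemma topspace_SOT [simp]: "topspace SOT = UNIV"
  unfolding SOT_def topspace_pullback_topology by simp

lemma continuous_map_SOT_eval: "continuous_map SOT euclidean (\<lambda>T. blinfun_apply T x)"
proof -
  have "continuous_map (product_topology (\<lambda>_. euclidean) UNIV) euclidean (\<lambda>f::'a\<Rightarrow>'a. f x)"
    by (rule continuous_map_product_projection) simp
  then have "continuous_map SOT euclidean ((\<lambda>f. f x) \<circ> blinfun_apply)"
    unfolding SOT_def by blast
  then show ?thesis by (simp add: o_def)
qed

lemma closedin_SOT_ball_image_near:
  assumes "finite S"
  shows "closedin SOT (ball_image_near r S)"
proof -
  have point_closed: "closedin SOT {T. dist (blinfun_apply T x) y \<le> r}" for x y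
  proof -
    have "closedin SOT {T \<in> topspace SOT. blinfun_apply T x \<in> cball y r}"
      by (rule closedin_continuous_map_preimage[OF continuous_map_SOT_eval]) simp
    then show ?thesis by (simp add: dist_commute)
  qed
  have "ball_image_near r S =
        (\<Inter>x\<in>ball 0 1. \<Union>y\<in>S. {T. dist (blinfun_apply T x) y \<le> r})"
    unfolding ball_image_near_def by auto
  also have "closedin SOT \<dots>"
    by (rule closedin_Inter) (auto intro!: closedin_Union simp: assms point_closed)
  finally show ?thesis .
qed

text \<open>A property of radii that is monotone in the radius holds for all positive radii
  iff it holds for the radii 1/(m+1); this turns "for every e > 0" into a countable condition.\<close>

lemma all_pos_iff_all_inverse_Suc:
  fixes P :: "real \<Rightarrow> bool"
  assumes mono: "\<And>e e'. e \<le> e' \<Longrightarrow> P e \<Longrightarrow> P e'"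
  shows "(\<forall>e>0. P e) \<longleftrightarrow> (\<forall>m::nat. P (1 / Suc m))"
proof
  assume "\<forall>e>0. P e"
  then show "\<forall>m::nat. P (1 / Suc m)" by simp
next
  assume all_m: "\<forall>m::nat. P (1 / Suc m)"
  show "\<forall>e>0. P e"
  proof (intro allI impI)
    fix e :: real assume "e > 0"
    then obtain m :: nat where "1 / Suc m < e" by (rule nat_approx_posE)
    then show "P e" using all_m mono less_imp_le by blast
  qed
qed

lemma compact_op_iff_dense_nets:
  fixes T :: "'a::{real_normed_vector, complete_space} \<Rightarrow>\<^sub>L 'a"
  assumes dense: "closure D = UNIV"
  shows "compact_op T \<longleftrightarrow>
         (\<forall>m::nat. \<exists>S. finite S \<and> S \<subseteq> D \<and> T \<in> ball_image_near (1 / Suc m) S)"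
proof -
  define covered where
    "covered e \<longleftrightarrow> (\<exists>S. finite S \<and> S \<subseteq> D \<and> blinfun_apply T ` ball 0 1 \<subseteq> (\<Union>y\<in>S. cball y e))"
    for e :: real
  have near: "T \<in> ball_image_near r S \<longleftrightarrow> blinfun_apply T ` ball 0 1 \<subseteq> (\<Union>y\<in>S. cball y r)"
    for r S
    unfolding ball_image_near_def by (auto simp: dist_commute image_subset_iff)
  have covered_mono: "covered e'" if le: "e \<le> e'" and cov: "covered e" for e e'
  proof -
    obtain S where S: "finite S" "S \<subseteq> D" "blinfun_apply T ` ball 0 1 \<subseteq> (\<Union>y\<in>S. cball y e)"
      using cov unfolding covered_def by auto
    have "(\<Union>y\<in>S. cball y e) \<subseteq> (\<Union>y\<in>S. cball y e')"
      using le by (intro UN_mono subset_cball order.refl)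
    then show ?thesis unfolding covered_def using S by (meson subset_trans)
  qed
  have "(\<forall>e>0. covered e) \<longleftrightarrow> (\<forall>m::nat. covered (1 / Suc m))"
    by (rule all_pos_iff_all_inverse_Suc[OF covered_mono])
  then show ?thesis
    unfolding compact_op_def compact_closure_iff_dense_nets[OF dense] near
    by (simp add: covered_def)
qed

theorem mainTheorem6:
  fixes J :: "'a::{real_inner, complete_space} \<Rightarrow> 'a"
  assumes "complex_structure J"
    and "separable_space TYPE('a)"
    and "infinite_dimensional TYPE('a)"
  shows "\<exists>F :: nat \<Rightarrow> nat \<Rightarrow> ('a \<Rightarrow>\<^sub>L 'a) set.
           (\<forall>m n. closedin (subtopology SOT (bounded_ops J)) (F m n)) \<and>
           {T \<in> bounded_ops J. compact_op T} = (\<Inter>m. \<Union>n. F m n)"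
proof -
  obtain D :: "'a set" where D: "countable D" "closure D = UNIV"
    using assms(2) unfolding separable_space_def by blast
  define Fin where "Fin = {S. finite S \<and> S \<subseteq> D}"
  have "countable Fin" unfolding Fin_def using D(1) by (rule countable_Collect_finite_subset)
  moreover have "Fin \<noteq> {}" unfolding Fin_def by blast
  ultimately have enum: "range (from_nat_into Fin) = Fin" by simp
  define F where "F m n = bounded_ops J \<inter> ball_image_near (1 / Suc m) (from_nat_into Fin n)"
    for m n :: nat
  have "closedin (subtopology SOT (bounded_ops J)) (F m n)" for m n
  proof -
    have "finite (from_nat_into Fin n)" using enum by (auto simp: Fin_def)
    then show ?thesis
      unfolding F_def closedin_subtopology by (blast dest: closedin_SOT_ball_image_near)
  qed
  moreover have "(\<Union>n. F m n) = bounded_ops J \<inter> (\<Union>S\<in>Fin. ball_image_near (1 / Suc m) S)" for m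
    unfolding F_def by (subst enum[symmetric]) auto
  then have "{T \<in> bounded_ops J. compact_op T} = (\<Inter>m. \<Union>n. F m n)"
    using compact_op_iff_dense_nets[OF D(2)] unfolding Fin_def by auto
  ultimately show ?thesis by blast
qed

end
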